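(* For all nonnegative integers $a,b,c$ with $a+b+c=d+1$, the following equalities hold in $\mathcal{B}_d$: $$f^{(a)}\binom{H_2}{b}e^{(c)}=\sum_{k=1}^{\min(a,c)}(-1)^{k-1}\binom{b+k}{k}f^{(a-k)}\binom{H_2}{b+k}e^{(c-k)},$$ $$e^{(a)}\binom{H_1}{b}f^{(c)}=\sum_{k=1}^{\min(a,c)}(-1)^{k-1}\binom{b+k}{k}e^{(a-k)}\binom{H_1}{b+k}f^{(c-k)}$$ (an empty sum being $0$).
   Context: Fix an integer $d\ge 0$. $\mathcal{B}_d$ is the associative $\mathbb{Q}$-algebra with $1$ generated by $e,f,H_1,H_2$ subject to the relations $H_1H_2=H_2H_1$, $H_1e-eH_1=e$, $H_1f-fH_1=-f$, $H_2e-eH_2=-e$, $H_2f-fH_2=f$, $ef-fe=H_1-H_2$, $H_1+H_2=d$, and $H_1(H_1-1)\cdots(H_1-d)=0$. For an element $T$ and integer $m\ge 0$, $T^{(m)}=T^m/m!$ and $\binom{T}{m}=T(T-1)\cdots(T-m+1)/m!$; both are defined to be $0$ for negative $m$. *)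

theory Defs
  imports Main
begin

text \<open>A ring with 1 is a Q-algebra exactly when every positive integer is invertible
  (the Q-algebra structure is then unique).\<close>
definition is_Q_algebra :: "'a::ring_1 itself \<Rightarrow> bool" where
  "is_Q_algebra _ \<longleftrightarrow> (\<forall>n::nat. n > 0 \<longrightarrow> (\<exists>y::'a. of_nat n * y = 1 \<and> y * of_nat n = 1))"

definition nat_inv :: "nat \<Rightarrow> 'a::ring_1" where
  "nat_inv n = (SOME y. of_nat n * y = 1 \<and> y * of_nat n = 1)"

definition dpow :: "'a::ring_1 \<Rightarrow> nat \<Rightarrow> 'a" where
  "dpow T m = nat_inv (fact m) * T ^ m"

fun falling :: "'a::ring_1 \<Rightarrow> nat \<Rightarrow> 'a" where
  "falling T 0 = 1"
| "falling T (Suc m) = falling T m * (T - of_nat m)"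

definition binom :: "'a::ring_1 \<Rightarrow> nat \<Rightarrow> 'a" where
  "binom T m = nat_inv (fact m) * falling T m"

definition Bd_rel :: "nat \<Rightarrow> 'a::ring_1 \<Rightarrow> 'a \<Rightarrow> 'a \<Rightarrow> 'a \<Rightarrow> bool" where
  "Bd_rel d e f H1 H2 \<longleftrightarrow>
     H1 * H2 = H2 * H1 \<and>
     H1 * e - e * H1 = e \<and>
     H1 * f - f * H1 = - f \<and>
     H2 * e - e * H2 = - e \<and>
     H2 * f - f * H2 = f \<and>
     e * f - f * e = H1 - H2 \<and>
     H1 + H2 = of_nat d \<and>
     falling H1 (Suc d) = 0"

end

theory Submission
  imports Defs "HOL-Computational_Algebra.Formal_Power_Series"
begin

(* Both identities express the vanishing of
     X = sum over k <= min a c of (-1)^k C(b+k,k) f^(a-k) binom(H2, b+k) e^(c-k),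
   the second one after the symmetry e <-> f, H1 <-> H2, which preserves the defining relations
   once H2 (H2-1) ... (H2-d) = 0 is known.

   Since H1 (H1-1) ... (H1-d) = 0, an element of B_d that kills every H1-eigenvector of the left
   regular representation is zero, so it suffices to show X v = 0 for H1 v = j v.  There
   binom(H2, b+k) acts on e^(c-k) v as the scalar C(d-j-c+k, b+k).  For j >= a every term of X v
   vanishes.  For j < a, Kostant's formula for f^(p) e^(s) v followed by the Vandermonde
   convolution rewrites X v as the sum over u of C(d-j-c, b) C(a-j-1, u) e^(c-u) f^(a-u) v, and
   each term is zero because f^(a-u) v has negative weight whenever u <= a-j-1. *)

section \<open>Rational scalars in a \<open>\<rat>\<close>-algebra\<close>

definition rat_scalar :: "rat \<Rightarrow> 'a::ring_1" where
  "rat_scalar q = of_int (fst (quotient_of q)) * nat_inv (nat (snd (quotient_of q)))"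

lemma rat_as_fraction:
  fixes q :: rat
  obtains n :: int and m :: nat where "m > 0" "q = of_int n / of_nat m"
proof -
  obtain n m where qo: "quotient_of q = (n, m)" by (cases "quotient_of q")
  have "m > 0" using quotient_of_denom_pos[OF qo] .
  then show ?thesis using that[of "nat m" n] quotient_of_div[OF qo] by simp
qed

locale Q_algebra =
  fixes ring_type :: "'a::ring_1 itself"
  assumes Q_algebra: "is_Q_algebra ring_type"
begin

lemma nat_inv_inverse:
  assumes "n > 0"
  shows "of_nat n * (nat_inv n :: 'a) = 1" and "nat_inv n * (of_nat n :: 'a) = 1"
  using Q_algebra assms unfolding is_Q_algebra_def nat_inv_def
  by (metis (mono_tags, lifting) someI_ex)+

lemma nat_inv_commute:
  assumes "n > 0"
  shows "(nat_inv n :: 'a) * x = x * nat_inv n"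
proof -
  have "(nat_inv n :: 'a) * x = nat_inv n * x * (of_nat n * nat_inv n)"
    using nat_inv_inverse[OF assms] by simp
  also have "\<dots> = nat_inv n * (of_nat n * x) * nat_inv n"
    by (simp add: mult.assoc mult_of_nat_commute)
  also have "\<dots> = x * nat_inv n"
    using nat_inv_inverse[OF assms] by (simp add: mult.assoc[symmetric])
  finally show ?thesis .
qed

lemma mult_of_nat_right_cancel:
  "n > 0 \<Longrightarrow> y * of_nat n = z * (of_nat n :: 'a) \<Longrightarrow> y = z"
  by (metis nat_inv_inverse(1) mult.assoc mult_1_right)

lemma rat_scalar_mult_of_nat:
  assumes "m > 0" and "q = of_int n / of_nat m"
  shows "rat_scalar q * of_nat m = (of_int n :: 'a)"
proof -
  obtain n0 m0 where qo: "quotient_of q = (n0, m0)" by (cases "quotient_of q")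
  have m0: "m0 > 0" using quotient_of_denom_pos[OF qo] .
  have "of_int n0 * of_int (int m) = (of_int n * of_int m0 :: rat)"
    using assms m0 quotient_of_div[OF qo] by (auto simp: field_simps)
  then have cross: "n0 * int m = n * m0" by (metis of_int_eq_iff of_int_mult)
  have "rat_scalar q * of_nat m = nat_inv (nat m0) * (of_int (n0 * int m) :: 'a)"
    using nat_inv_commute[of "nat m0"] m0 by (simp add: rat_scalar_def qo mult.assoc)
  also have "\<dots> = nat_inv (nat m0) * of_nat (nat m0) * of_int n"
    using cross m0 by (simp add: mult.commute mult.assoc)
  also have "\<dots> = of_int n" using nat_inv_inverse(2)[of "nat m0"] m0 by simp
  finally show ?thesis .
qed

lemma rat_scalar_eqI:
  assumes "m > 0" and "q = of_int n / of_nat m" and "y * of_nat m = (of_int n :: 'a)"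
  shows "rat_scalar q = y"
  using rat_scalar_mult_of_nat[OF assms(1,2)] assms(3) mult_of_nat_right_cancel[OF assms(1)]
  by metis

lemma rat_scalar_commute: "rat_scalar q * x = x * (rat_scalar q :: 'a)"
proof -
  have "nat (snd (quotient_of q)) > 0" using quotient_of_denom_pos' by simp
  then show ?thesis
    unfolding rat_scalar_def by (metis mult.assoc mult_of_int_commute nat_inv_commute)
qed

lemma rat_scalar_left_commute: "Y * (rat_scalar q * Z) = rat_scalar q * ((Y::'a) * Z)"
  by (metis mult.assoc rat_scalar_commute)

lemma rat_scalar_add: "rat_scalar (x + y) = rat_scalar x + (rat_scalar y :: 'a)"
proof -
  obtain a b where b: "b > 0" "x = of_int a / of_nat b" by (rule rat_as_fraction)
  obtain c k where k: "k > 0" "y = of_int c / of_nat k" by (rule rat_as_fraction)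
  have "(rat_scalar x + rat_scalar y) * of_nat (b * k)
      = rat_scalar x * of_nat b * of_nat k + rat_scalar y * of_nat k * (of_nat b :: 'a)"
    by (simp only: distrib_right mult.assoc of_nat_mult[symmetric] mult.commute)
  also have "\<dots> = of_int (a * k + c * b)"
    using rat_scalar_mult_of_nat[OF b] rat_scalar_mult_of_nat[OF k] by simp
  finally have lhs: "(rat_scalar x + rat_scalar y) * of_nat (b * k) = (of_int (a * k + c * b) :: 'a)" .
  have "x + y = of_int (a * k + c * b) / of_nat (b * k)"
    using b k by (simp add: field_simps)
  from rat_scalar_eqI[OF _ this lhs] show ?thesis
    using b k by simp
qed

lemma rat_scalar_mult: "rat_scalar (x * y) = rat_scalar x * (rat_scalar y :: 'a)"
proof -
  obtain a b where b: "b > 0" "x = of_int a / of_nat b" by (rule rat_as_fraction)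
  obtain c k where k: "k > 0" "y = of_int c / of_nat k" by (rule rat_as_fraction)
  have "rat_scalar x * rat_scalar y * of_nat (b * k)
      = rat_scalar x * of_nat b * (rat_scalar y * (of_nat k :: 'a))"
    by (metis mult.assoc of_nat_mult rat_scalar_commute[of y "of_nat b"])
  also have "\<dots> = of_int (a * c)"
    using rat_scalar_mult_of_nat[OF b] rat_scalar_mult_of_nat[OF k] by simp
  finally have lhs: "rat_scalar x * rat_scalar y * of_nat (b * k) = (of_int (a * c) :: 'a)" .
  have "x * y = of_int (a * c) / of_nat (b * k)"
    using b k by (simp add: field_simps)
  from rat_scalar_eqI[OF _ this lhs] show ?thesis
    using b k by simp
qed

lemma rat_scalar_of_int [simp]: "rat_scalar (of_int n) = (of_int n :: 'a)"
  by (rule rat_scalar_eqI[of 1]) auto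

lemma rat_scalar_of_nat [simp]: "rat_scalar (of_nat n) = (of_nat n :: 'a)"
  using rat_scalar_of_int[of "int n"] by simp

lemma rat_scalar_0 [simp]: "rat_scalar 0 = (0::'a)"
  using rat_scalar_of_int[of 0] by simp

lemma rat_scalar_1 [simp]: "rat_scalar 1 = (1::'a)"
  using rat_scalar_of_int[of 1] by simp

lemma rat_scalar_minus: "rat_scalar (- x) = - (rat_scalar x :: 'a)"
  using rat_scalar_add[of "- x" x] by (simp add: eq_neg_iff_add_eq_0)

lemma rat_scalar_diff: "rat_scalar (x - y) = rat_scalar x - (rat_scalar y :: 'a)"
  using rat_scalar_add[of "x - y" y] by (simp add: eq_diff_eq)

lemma rat_scalar_sum: "rat_scalar (\<Sum>k\<in>S. x k) = (\<Sum>k\<in>S. (rat_scalar (x k) :: 'a))"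
  by (induction S rule: infinite_finite_induct) (simp_all add: rat_scalar_add)

lemma rat_scalar_inverse_fact: "rat_scalar (1 / fact m) = (nat_inv (fact m) :: 'a)"
  by (rule rat_scalar_eqI[of "fact m" _ 1]) (simp_all add: nat_inv_inverse)

lemma rat_scalar_cancel: "x \<noteq> 0 \<Longrightarrow> rat_scalar x * v = 0 \<Longrightarrow> v = (0::'a)"
  by (metis mult.assoc mult_zero_right nonzero_divide_eq_eq rat_scalar_1 rat_scalar_mult mult_1_left)

lemma rat_scalar_inverse_of_nat_mult:
  assumes "n > 0"
  shows "rat_scalar (1 / of_nat n) * (of_nat n * x) = (x::'a)"
proof -
  have "rat_scalar (1 / of_nat n) * (of_nat n :: 'a) = rat_scalar (1 / of_nat n * of_nat n)"
    by (simp only: rat_scalar_mult rat_scalar_of_nat)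
  also have "1 / of_nat n * of_nat n = (1 :: rat)"
    using assms by simp
  finally show ?thesis
    by (simp only: mult.assoc[symmetric] rat_scalar_1 mult_1_left)
qed

lemma rat_scalar_sign_Suc: "rat_scalar ((-1) ^ Suc k * of_nat n) = - (of_int ((-1) ^ k) * of_nat n :: 'a)"
proof -
  have "rat_scalar ((-1) ^ Suc k * of_nat n) = (rat_scalar (of_int (- ((-1) ^ k * int n))) :: 'a)"
    by simp
  then show ?thesis
    by (simp only: rat_scalar_of_int) simp
qed

lemma dpow_rat_scalar: "dpow (T::'a) m = rat_scalar (1 / fact m) * T ^ m"
  unfolding dpow_def rat_scalar_inverse_fact ..

lemma binom_rat_scalar: "binom (T::'a) m = rat_scalar (1 / fact m) * falling T m"
  unfolding binom_def rat_scalar_inverse_fact ..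

lemma dpow_Suc_left: "dpow (T::'a) (Suc p) = rat_scalar (1 / of_nat (Suc p)) * (T * dpow T p)"
proof -
  have "(1 / fact (Suc p) :: rat) = 1 / of_nat (Suc p) * (1 / fact p)"
    by simp
  then have "dpow T (Suc p) = rat_scalar (1 / of_nat (Suc p)) * (rat_scalar (1 / fact p) * (T * T ^ p))"
    by (simp only: dpow_rat_scalar rat_scalar_mult mult.assoc power_Suc)
  also have "rat_scalar (1 / fact p) * (T * T ^ p) = T * dpow T p"
    by (simp only: dpow_rat_scalar rat_scalar_commute mult.assoc)
  finally show ?thesis .
qed

lemma mult_dpow: "(T::'a) * dpow T p = of_nat (Suc p) * dpow T (Suc p)"
  by (simp only: dpow_Suc_left rat_scalar_left_commute rat_scalar_inverse_of_nat_mult zero_less_Suc)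

end

section \<open>Elements whose spectrum lies in \<open>{0..d}\<close>\<close>

lemma falling_add: "falling (T::'a::ring_1) (p + q) = falling T p * falling (T - of_nat p) q"
  by (induction q) (simp_all add: mult.assoc algebra_simps)

lemma falling_commute: "(T::'a::ring_1) * falling T n = falling T n * T"
proof (induction n)
  case (Suc n)
  have "T * (T - of_nat n) = (T - of_nat n) * T"
    by (simp add: right_diff_distrib left_diff_distrib mult_of_nat_commute)
  with Suc show ?case by (metis falling.simps(2) mult.assoc)
qed simp

lemma falling_Suc_annihilated_eigenvector:
  assumes "falling (T::'a::ring_1) (Suc m) * G = 0"
  shows "T * (falling T m * G) = of_nat m * (falling T m * G)"
proof -
  have "T * (falling T m * G) = falling T (Suc m) * G + falling T m * (of_nat m * G)"
    by (simp add: mult.assoc[symmetric] falling_commute left_diff_distrib right_diff_distrib)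
  then show ?thesis
    using assms by (metis add_0 mult.assoc mult_of_nat_commute)
qed

context Q_algebra
begin

lemma falling_eigenvector:
  "(T::'a) * v = rat_scalar x * v \<Longrightarrow> falling T n * v = rat_scalar (\<Prod>i<n. x - of_nat i) * v"
proof (induction n)
  case (Suc n)
  have "falling T (Suc n) * v = falling T n * (T * v - of_nat n * v)"
    by (simp add: mult.assoc left_diff_distrib right_diff_distrib)
  also have "\<dots> = falling T n * (rat_scalar (x - of_nat n) * v)"
    using Suc.prems by (simp add: rat_scalar_diff left_diff_distrib)
  also have "\<dots> = rat_scalar (x - of_nat n) * (falling T n * v)"
    by (simp only: mult.assoc[symmetric] rat_scalar_commute[of _ "falling T n"])
  also have "\<dots> = rat_scalar (\<Prod>i<Suc n. x - of_nat i) * v"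
    using Suc by (simp add: mult.assoc[symmetric] rat_scalar_mult[symmetric] mult.commute)
  finally show ?case .
qed simp

lemma binom_eigenvector:
  assumes "(T::'a) * v = rat_scalar x * v"
  shows "binom T n * v = rat_scalar (x gchoose n) * v"
proof -
  have "binom T n * v = rat_scalar (1 / fact n) * (falling T n * v)"
    by (simp add: binom_rat_scalar mult.assoc)
  also have "\<dots> = rat_scalar (1 / fact n) * rat_scalar (\<Prod>i<n. x - of_nat i) * v"
    by (simp add: falling_eigenvector[OF assms] mult.assoc)
  also have "\<dots> = rat_scalar (1 / fact n * (\<Prod>i<n. x - of_nat i)) * v"
    by (simp only: rat_scalar_mult)
  also have "1 / fact n * (\<Prod>i<n. x - of_nat i) = x gchoose n"
    by (simp add: gbinomial_prod_rev atLeast0LessThan)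
  finally show ?thesis .
qed

lemma falling_left_eigenvector:
  "Y * (T::'a) = rat_scalar \<mu> * Y \<Longrightarrow> Y * falling T n = rat_scalar (\<Prod>i<n. \<mu> - of_nat i) * Y"
proof (induction n)
  case (Suc n)
  have "Y * falling T (Suc n) = Y * falling T n * (T - of_nat n)"
    by (simp add: mult.assoc)
  also have "\<dots> = rat_scalar (\<Prod>i<n. \<mu> - of_nat i) * (Y * T - Y * of_nat n)"
    using Suc by (simp add: mult.assoc right_diff_distrib)
  also have "Y * T - Y * of_nat n = rat_scalar (\<mu> - of_nat n) * Y"
    using Suc.prems by (simp add: rat_scalar_diff left_diff_distrib mult_of_nat_commute[of n Y, symmetric])
  finally show ?case
    by (simp add: mult.assoc[symmetric] rat_scalar_mult[symmetric] mult.commute)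
qed simp

text \<open>Downward induction on \<open>m\<close> gives \<open>X * falling T m = 0\<close>: the remaining factors \<open>G\<close> of
  \<open>falling T (Suc d)\<close> make \<open>falling T m * G\<close> an eigenvector with eigenvalue \<open>m\<close>, while they
  act on \<open>X * falling T m\<close> by a nonzero scalar.\<close>
lemma eq_0_if_annihilates_eigenvectors:
  fixes T X :: 'a
  assumes T: "falling T (Suc d) = 0"
    and X: "\<And>m v. m \<le> d \<Longrightarrow> T * v = of_nat m * v \<Longrightarrow> X * v = 0"
  shows "X = 0"
proof -
  have peel: "X * falling T m = 0" if "m \<le> d" and "X * falling T (Suc m) = 0" for m
  proof -
    define Y where "Y = X * falling T m"
    define G where "G = falling (T - of_nat (Suc m)) (d - m)"
    have "falling T (Suc m) * G = 0"
      using T falling_add[of T "Suc m" "d - m"] \<open>m \<le> d\<close> by (simp add: G_def)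
    then have "Y * G = 0"
      using X[OF \<open>m \<le> d\<close> falling_Suc_annihilated_eigenvector] by (simp add: Y_def mult.assoc)
    have "Y * (T - of_nat m) = 0"
      using \<open>X * falling T (Suc m) = 0\<close> by (simp add: Y_def mult.assoc)
    then have "Y * (T - of_nat (Suc m)) = rat_scalar (- 1) * Y"
      by (simp add: algebra_simps rat_scalar_minus)
    then have "Y * G = rat_scalar (\<Prod>i<d - m. - 1 - of_nat i) * Y"
      unfolding G_def by (rule falling_left_eigenvector)
    moreover have "(\<Prod>i<d - m. - 1 - of_nat i :: rat) \<noteq> 0"
      by (simp add: prod_zero_iff)
    ultimately show ?thesis
      using \<open>Y * G = 0\<close> rat_scalar_cancel by (metis Y_def)
  qed
  have "X * falling T m = 0" if "m \<le> Suc d" for m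
    using that
  proof (induction rule: inc_induct)
    case base
    show ?case by (simp only: T mult_zero_right)
  next
    case (step m)
    then show ?case using peel by (meson less_Suc_eq_le)
  qed
  from this[of 0] show ?thesis by simp
qed

end

section \<open>Binomial identities\<close>

lemma sum_atMost_triangle:
  "(\<Sum>k\<le>n. \<Sum>t\<le>n - k. g k t) = (\<Sum>u\<le>(n::nat). \<Sum>k\<le>u. (g k (u - k) :: 'b::comm_monoid_add))"
proof -
  have "(\<Sum>k\<le>n. \<Sum>t\<le>n - k. g k t) = (\<Sum>(k, t)\<in>Sigma {..n} (\<lambda>k. {..n - k}). g k t)"
    by (rule sum.Sigma) auto
  also have "Sigma {..n} (\<lambda>k. {..n - k}) = {(i, j). i + j \<le> n}"
    by auto
  finally show ?thesis
    by (simp only: sum.triangle_reindex_eq)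
qed

lemma gbinomial_Suc_weighted:
  fixes L :: "'a::field_char_0"
  shows "(of_nat p - of_nat t) * (L gchoose Suc t) + (L + of_nat p - of_nat t + 1) * (L gchoose t)
       = of_nat (Suc p) * ((L + 1) gchoose Suc t)"
  using gbinomial_mult_1[of L t] gbinomial_Suc_Suc[of L t] by (simp add: algebra_simps)

lemma gbinomial_trinomial_negated:
  fixes N b k :: nat
  shows "(-1) ^ k * of_nat ((b + k) choose k) * (of_nat (N + k) gchoose (b + k))
       = (of_nat N gchoose b) * ((- of_nat N - 1) gchoose k :: 'a::field_char_0)"
proof -
  have "(of_nat (N + k) gchoose (b + k)) * (of_nat (b + k) gchoose k)
      = (of_nat (N + k) gchoose k) * (of_nat N gchoose b :: 'a)"
    using gbinomial_trinomial_revision[of k "b + k" "of_nat (N + k) :: 'a"] by simp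
  moreover have "(of_nat (N + k) gchoose k :: 'a) = (-1) ^ k * ((- of_nat N - 1) gchoose k)"
    using gbinomial_negated_upper[of "of_nat (N + k) :: 'a" k] by simp
  ultimately show ?thesis
    by (simp add: binomial_gbinomial algebra_simps flip: power_mult_distrib)
qed

context Q_algebra
begin

lemma rat_scalar_sum_convolution:
  fixes n :: nat and x y :: "nat \<Rightarrow> rat" and Y :: "nat \<Rightarrow> 'a"
  shows "(\<Sum>k\<le>n. rat_scalar (x k) * (\<Sum>t\<le>n - k. rat_scalar (y t) * Y (k + t)))
     = (\<Sum>u\<le>n. rat_scalar (\<Sum>k\<le>u. x k * y (u - k)) * Y u)"
proof -
  have "(\<Sum>k\<le>n. rat_scalar (x k) * (\<Sum>t\<le>n - k. rat_scalar (y t) * Y (k + t)))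
      = (\<Sum>k\<le>n. \<Sum>t\<le>n - k. rat_scalar (x k) * (rat_scalar (y t) * Y (k + t)))"
    by (simp only: sum_distrib_left)
  also have "\<dots> = (\<Sum>u\<le>n. \<Sum>k\<le>u. rat_scalar (x k) * (rat_scalar (y (u - k)) * Y (k + (u - k))))"
    by (rule sum_atMost_triangle[where g = "\<lambda>k t. rat_scalar (x k) * (rat_scalar (y t) * Y (k + t))"])
  also have "\<dots> = (\<Sum>u\<le>n. \<Sum>k\<le>u. rat_scalar (x k * y (u - k)) * Y u)"
    by (intro sum.cong refl) (simp add: rat_scalar_mult mult.assoc)
  also have "\<dots> = (\<Sum>u\<le>n. rat_scalar (\<Sum>k\<le>u. x k * y (u - k)) * Y u)"
    by (simp only: rat_scalar_sum sum_distrib_right)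
  finally show ?thesis .
qed

lemma Kostant_coefficient_recurrence:
  fixes L :: rat and A :: "nat \<Rightarrow> 'a"
  shows "(\<Sum>t\<le>p. rat_scalar ((L gchoose t) * (of_nat p - of_nat t + 1)) * A t)
       + (\<Sum>t\<le>p. rat_scalar ((L gchoose t) * (L + of_nat p - of_nat t + 1)) * A (Suc t))
       = of_nat (Suc p) * (\<Sum>u\<le>Suc p. rat_scalar ((L + 1) gchoose u) * A u)"
proof -
  have "(\<Sum>t\<le>p. rat_scalar ((L gchoose t) * (of_nat p - of_nat t + 1)) * A t)
      = (\<Sum>u\<le>Suc p. rat_scalar ((L gchoose u) * (of_nat p - of_nat u + 1)) * A u)"
    by simp
  also have "\<dots> = rat_scalar ((L gchoose 0) * (of_nat p - of_nat 0 + 1)) * A 0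
      + (\<Sum>t\<le>p. rat_scalar ((L gchoose Suc t) * (of_nat p - of_nat (Suc t) + 1)) * A (Suc t))"
    by (rule sum.atMost_Suc_shift)
  also have "rat_scalar ((L gchoose 0) * (of_nat p - of_nat 0 + 1)) = (of_nat (Suc p) :: 'a)"
    using rat_scalar_of_nat[of "Suc p"] by (simp add: add.commute)
  also have "(\<Sum>t\<le>p. rat_scalar ((L gchoose Suc t) * (of_nat p - of_nat (Suc t) + 1)) * A (Suc t))
      = (\<Sum>t\<le>p. rat_scalar ((L gchoose Suc t) * (of_nat p - of_nat t)) * A (Suc t))"
    by simp
  finally have "(\<Sum>t\<le>p. rat_scalar ((L gchoose t) * (of_nat p - of_nat t + 1)) * A t)
       + (\<Sum>t\<le>p. rat_scalar ((L gchoose t) * (L + of_nat p - of_nat t + 1)) * A (Suc t))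
      = of_nat (Suc p) * A 0 + (\<Sum>t\<le>p. rat_scalar ((of_nat p - of_nat t) * (L gchoose Suc t)
          + (L + of_nat p - of_nat t + 1) * (L gchoose t)) * A (Suc t))"
    by (simp add: rat_scalar_add distrib_right sum.distrib mult.commute add.assoc)
  also have "\<dots> = of_nat (Suc p) * (A 0 + (\<Sum>t\<le>p. rat_scalar ((L + 1) gchoose Suc t) * A (Suc t)))"
    by (simp only: gbinomial_Suc_weighted rat_scalar_mult rat_scalar_of_nat mult.assoc distrib_left
        sum_distrib_left)
  also have "A 0 + (\<Sum>t\<le>p. rat_scalar ((L + 1) gchoose Suc t) * A (Suc t))
      = (\<Sum>u\<le>Suc p. rat_scalar ((L + 1) gchoose u) * A u)"
    by (simp only: sum.atMost_Suc_shift gbinomial_0 rat_scalar_1 mult_1_left)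
  finally show ?thesis .
qed

end

section \<open>Weight vectors in \<open>B\<^sub>d\<close>\<close>

(* Integer exponents, with the junk value 0 for negative ones, let Kostant's formula below sum
   over all t <= p without case distinctions. *)
definition dpow_int :: "'a::ring_1 \<Rightarrow> int \<Rightarrow> 'a" where
  "dpow_int T n = (if n < 0 then 0 else dpow T (nat n))"

lemma dpow_int_of_nat_diff: "k \<le> c \<Longrightarrow> dpow_int T (int c - int k) = dpow T (c - k)"
  unfolding dpow_int_def by (simp add: nat_diff_distrib)

locale Bd = Q_algebra "TYPE('a::ring_1)" +
  fixes d :: nat and e f H1 H2 :: "'a::ring_1"
  assumes relations: "Bd_rel d e f H1 H2"
begin

lemma H1_mult_e: "H1 * e = e * H1 + e"
  using relations unfolding Bd_rel_def by (simp add: algebra_simps)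

lemma H1_mult_f: "H1 * f = f * H1 - f"
  using relations unfolding Bd_rel_def by (simp add: algebra_simps)

lemma H2_eq: "H2 = of_nat d - H1"
  using relations unfolding Bd_rel_def by (simp add: algebra_simps)

lemma f_mult_e: "f * e = e * f - (H1 - H2)"
  using relations unfolding Bd_rel_def by (simp add: algebra_simps)

lemma falling_H1: "falling H1 (Suc d) = 0"
  using relations unfolding Bd_rel_def by simp

(* Vectors are elements of the algebra itself, acted on by left multiplication. *)
definition weight_vector :: "int \<Rightarrow> 'a \<Rightarrow> bool" where
  "weight_vector j v \<longleftrightarrow> H1 * v = of_int j * v"

lemma weight_vector_e: "weight_vector j v \<Longrightarrow> weight_vector (j + 1) (e * v)"
  unfolding weight_vector_def
  by (simp add: H1_mult_e distrib_right algebra_simps flip: mult.assoc)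
    (metis mult.assoc mult_of_int_commute)

lemma weight_vector_f: "weight_vector j v \<Longrightarrow> weight_vector (j - 1) (f * v)"
  unfolding weight_vector_def
  by (simp add: H1_mult_f left_diff_distrib algebra_simps flip: mult.assoc)
    (metis mult.assoc mult_of_int_commute)

lemma weight_vector_e_power: "weight_vector j v \<Longrightarrow> weight_vector (j + int n) (e ^ n * v)"
proof (induction n)
  case (Suc n)
  then show ?case
    using weight_vector_e[of "j + int n" "e ^ n * v"] by (simp add: mult.assoc ac_simps)
qed simp

lemma weight_vector_f_power: "weight_vector j v \<Longrightarrow> weight_vector (j - int n) (f ^ n * v)"
proof (induction n)
  case (Suc n)
  then show ?case
    using weight_vector_f[of "j - int n" "f ^ n * v"] by (simp add: mult.assoc algebra_simps)
qed simp

lemma weight_vector_rat_scalar: "weight_vector j v \<Longrightarrow> weight_vector j (rat_scalar q * v)"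
  unfolding weight_vector_def by (metis mult.assoc rat_scalar_commute)

lemma weight_vector_dpow_e: "weight_vector j v \<Longrightarrow> weight_vector (j + int n) (dpow e n * v)"
  by (simp add: dpow_rat_scalar mult.assoc weight_vector_rat_scalar weight_vector_e_power)

lemma weight_vector_dpow_f: "weight_vector j v \<Longrightarrow> weight_vector (j - int n) (dpow f n * v)"
  by (simp add: dpow_rat_scalar mult.assoc weight_vector_rat_scalar weight_vector_f_power)

lemma weight_vector_dpow_int_e: "weight_vector j v \<Longrightarrow> weight_vector (j + n) (dpow_int e n * v)"
  using weight_vector_dpow_e[of j v "nat n"] by (simp add: dpow_int_def weight_vector_def)

lemma H1_weight_vector: "weight_vector j v \<Longrightarrow> H1 * v = rat_scalar (of_int j) * v"
  unfolding weight_vector_def by simp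

lemma H2_weight_vector: "weight_vector j v \<Longrightarrow> H2 * v = rat_scalar (of_int (int d - j)) * v"
  unfolding weight_vector_def H2_eq by (simp add: left_diff_distrib rat_scalar_diff)

lemma H1_minus_H2_weight_vector:
  assumes "weight_vector j v"
  shows "(H1 - H2) * v = of_int (2 * j - int d) * v"
proof -
  have "(H1 - H2) * v = rat_scalar (of_int j - of_int (int d - j)) * v"
    by (simp only: left_diff_distrib H1_weight_vector[OF assms] H2_weight_vector[OF assms]
        rat_scalar_diff)
  also have "(of_int j - of_int (int d - j) :: rat) = of_int (2 * j - int d)"
    by simp
  finally show ?thesis by (simp only: rat_scalar_of_int)
qed

lemma weight_vector_eq_0:
  assumes "weight_vector j v" and "j < 0 \<or> int d < j"
  shows "v = 0"
proof -
  have "rat_scalar (\<Prod>i<Suc d. of_int j - of_nat i) * v = falling H1 (Suc d) * v"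
    by (rule falling_eigenvector[symmetric]) (rule H1_weight_vector[OF assms(1)])
  then have "rat_scalar (\<Prod>i<Suc d. of_int j - of_nat i) * v = 0"
    by (simp only: falling_H1 mult_zero_left)
  moreover have "(\<Prod>i<Suc d. of_int j - of_nat i :: rat) \<noteq> 0"
    using assms(2) by (auto simp: prod_zero_iff)
  ultimately show ?thesis
    using rat_scalar_cancel by blast
qed

lemma f_mult_e_power_weight_vector:
  assumes "weight_vector j w"
  shows "f * (e ^ Suc s * w)
       = e ^ Suc s * (f * w) + of_int (int (Suc s) * (int d - 2 * j - int s)) * (e ^ s * w)"
proof (induction s)
  case 0
  have "f * (e ^ Suc 0 * w) = e * (f * w) - (H1 - H2) * w"
    by (simp add: f_mult_e left_diff_distrib flip: mult.assoc)
  also have "(H1 - H2) * w = - (of_int (int d - 2 * j) * w)"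
    using H1_minus_H2_weight_vector[OF assms] by (metis minus_diff_eq mult_minus_left of_int_minus)
  finally show ?case by simp
next
  case (Suc s)
  define c where "c = int (Suc s) * (int d - 2 * j - int s)"
  define c' where "c' = 2 * (j + int (Suc s)) - int d"
  have "f * (e ^ Suc (Suc s) * w) = e * (f * (e ^ Suc s * w)) - (H1 - H2) * (e ^ Suc s * w)"
    by (simp only: power_Suc[of e "Suc s"] mult.assoc[symmetric] f_mult_e left_diff_distrib)
  also have "e * (f * (e ^ Suc s * w)) = e ^ Suc (Suc s) * (f * w) + e * (of_int c * (e ^ s * w))"
    by (simp only: Suc c_def distrib_left power_Suc[of e "Suc s"] mult.assoc)
  also have "e * (of_int c * (e ^ s * w)) = of_int c * (e ^ Suc s * w)"
    by (simp only: mult.assoc[symmetric] mult_of_int_commute[of c e] power_Suc)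
  also have "(H1 - H2) * (e ^ Suc s * w) = of_int c' * (e ^ Suc s * w)"
    unfolding c'_def by (rule H1_minus_H2_weight_vector[OF weight_vector_e_power[OF assms]])
  also have "e ^ Suc (Suc s) * (f * w) + of_int c * (e ^ Suc s * w) - of_int c' * (e ^ Suc s * w)
      = e ^ Suc (Suc s) * (f * w) + of_int (c - c') * (e ^ Suc s * w)"
    by (simp only: of_int_diff left_diff_distrib add_diff_eq)
  also have "c - c' = int (Suc (Suc s)) * (int d - 2 * j - int (Suc s))"
    unfolding c_def c'_def by (simp add: algebra_simps)
  finally show ?case .
qed

lemma f_mult_dpow_int_e_weight_vector:
  assumes "weight_vector j w"
  shows "f * (dpow_int e n * w)
       = dpow_int e n * (f * w) + of_int (int d - 2 * j - n + 1) * (dpow_int e (n - 1) * w)"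
proof (cases "n < 0")
  case True
  then show ?thesis by (simp add: dpow_int_def)
next
  case False
  then obtain m where n: "n = int m"
    using nonneg_int_cases by (metis not_less)
  show ?thesis
  proof (cases m)
    case 0
    then show ?thesis by (simp add: n dpow_int_def dpow_rat_scalar)
  next
    case (Suc s)
    have n_Suc: "n = int (Suc s)" and "n - 1 = int s"
      using n Suc by simp_all
    then have "dpow_int e n = dpow e (Suc s)" and "dpow_int e (n - 1) = dpow e s"
      by (simp_all only: dpow_int_def nat_int of_nat_less_0_iff if_False)
    then have En: "dpow_int e n = rat_scalar (1 / fact (Suc s)) * e ^ Suc s"
      and En1: "dpow_int e (n - 1) = rat_scalar (1 / fact s) * e ^ s"
      by (simp_all only: dpow_rat_scalar)
    have coefficient: "1 / fact (Suc s) * of_int (int (Suc s) * (int d - 2 * j - int s))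
        = of_int (int d - 2 * j - n + 1) * (1 / fact s :: rat)"
    proof -
      have "of_int (int (Suc s) * (int d - 2 * j - int s))
          = (of_nat (Suc s) * of_int (int d - 2 * j - n + 1) :: rat)"
        using n_Suc by simp
      then show ?thesis by (simp del: of_nat_Suc)
    qed
    have "f * (dpow_int e n * w) = rat_scalar (1 / fact (Suc s)) * (f * (e ^ Suc s * w))"
      by (simp only: En mult.assoc rat_scalar_left_commute)
    also have "\<dots> = dpow_int e n * (f * w)
        + rat_scalar (1 / fact (Suc s) * of_int (int (Suc s) * (int d - 2 * j - int s))) * (e ^ s * w)"
      by (simp only: f_mult_e_power_weight_vector[OF assms] distrib_left En mult.assoc
          rat_scalar_mult rat_scalar_of_int)
    also have "\<dots> = dpow_int e n * (f * w) + of_int (int d - 2 * j - n + 1) * (dpow_int e (n - 1) * w)"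
      by (simp only: coefficient rat_scalar_mult En1 rat_scalar_of_int mult.assoc)
    finally show ?thesis .
  qed
qed

lemma f_mult_dpow_int_e_dpow_f_weight_vector:
  assumes v: "weight_vector j v"
  shows "f * (dpow_int e n * (dpow f q * v))
       = of_nat (Suc q) * (dpow_int e n * (dpow f (Suc q) * v))
         + of_int (int d - 2 * (j - int q) - n + 1) * (dpow_int e (n - 1) * (dpow f q * v))"
proof -
  have "f * (dpow f q * v) = of_nat (Suc q) * (dpow f (Suc q) * v)"
    by (simp only: mult.assoc[symmetric] mult_dpow)
  moreover have "dpow_int e n * (of_nat (Suc q) * Z) = of_nat (Suc q) * (dpow_int e n * Z)" for Z
    by (simp only: mult.assoc[symmetric] mult_of_nat_commute[of "Suc q" "dpow_int e n"])
  ultimately show ?thesis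
    by (simp only: f_mult_dpow_int_e_weight_vector[OF weight_vector_dpow_f[OF v]])
qed

lemma Kostant_formula_weight_vector:
  assumes v: "weight_vector j v"
  shows "dpow f p * (dpow_int e s * v)
       = (\<Sum>t\<le>p. rat_scalar (of_int (int d - 2 * j + int p - s) gchoose t)
                  * (dpow_int e (s - int t) * (dpow f (p - t) * v)))"
proof (induction p)
  case 0
  then show ?case by (simp add: dpow_rat_scalar)
next
  case (Suc p)
  define L :: rat where "L = of_int (int d - 2 * j + int p - s)"
  define A where "A u = dpow_int e (s - int u) * (dpow f (Suc p - u) * v)" for u
  have f_term: "f * (dpow_int e (s - int t) * (dpow f (p - t) * v))
      = rat_scalar (of_nat p - of_nat t + 1) * A t
        + rat_scalar (L + of_nat p - of_nat t + 1) * A (Suc t)" if "t \<le> p" for t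
  proof -
    have "(of_nat p - of_nat t + 1 :: rat) = of_nat (Suc (p - t))"
      and "L + of_nat p - of_nat t + 1 = of_int (int d - 2 * (j - int (p - t)) - (s - int t) + 1)"
      and "Suc p - t = Suc (p - t)" and "s - int (Suc t) = s - int t - 1"
      using that by (simp_all add: L_def of_nat_diff)
    then show ?thesis
      unfolding A_def f_mult_dpow_int_e_dpow_f_weight_vector[OF v]
      by (simp only: rat_scalar_of_nat rat_scalar_of_int diff_Suc_Suc)
  qed
  have "f * (dpow f p * (dpow_int e s * v))
      = (\<Sum>t\<le>p. rat_scalar (L gchoose t) * (f * (dpow_int e (s - int t) * (dpow f (p - t) * v))))"
    by (simp only: Suc.IH L_def sum_distrib_left rat_scalar_left_commute)
  also have "\<dots> = (\<Sum>t\<le>p. rat_scalar ((L gchoose t) * (of_nat p - of_nat t + 1)) * A t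
      + rat_scalar ((L gchoose t) * (L + of_nat p - of_nat t + 1)) * A (Suc t))"
    by (intro sum.cong refl)
      (simp only: f_term atMost_iff distrib_left[where 'a = 'a] rat_scalar_mult mult.assoc)
  also have "\<dots> = of_nat (Suc p) * (\<Sum>u\<le>Suc p. rat_scalar ((L + 1) gchoose u) * A u)"
    by (simp only: sum.distrib Kostant_coefficient_recurrence)
  also have "L + 1 = of_int (int d - 2 * j + int (Suc p) - s)"
    by (simp add: L_def)
  finally show ?case
    by (simp only: dpow_Suc_left mult.assoc rat_scalar_inverse_of_nat_mult zero_less_Suc A_def)
qed

section \<open>The relation on weight vectors\<close>

lemma relation_weight_vector_expand:
  assumes v: "weight_vector j v"
  shows "(\<Sum>k\<le>min a c. rat_scalar (\<beta> k) * (dpow f (a - k) * binom H2 (b + k) * dpow e (c - k))) * v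
       = (\<Sum>k\<le>a. rat_scalar (\<beta> k * (of_int (int d - j - int c + int k) gchoose (b + k)))
                  * (dpow f (a - k) * (dpow_int e (int c - int k) * v)))"
proof -
  have "(\<Sum>k\<le>min a c. rat_scalar (\<beta> k) * (dpow f (a - k) * binom H2 (b + k) * dpow e (c - k))) * v
      = (\<Sum>k\<le>min a c. rat_scalar (\<beta> k)
           * (dpow f (a - k) * (binom H2 (b + k) * (dpow_int e (int c - int k) * v))))"
    by (auto simp: sum_distrib_right mult.assoc dpow_int_of_nat_diff intro!: sum.cong)
  also have "\<dots> = (\<Sum>k\<le>a. rat_scalar (\<beta> k)
           * (dpow f (a - k) * (binom H2 (b + k) * (dpow_int e (int c - int k) * v))))"
    by (rule sum.mono_neutral_left) (auto simp: dpow_int_def)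
  also have "\<dots> = (\<Sum>k\<le>a. rat_scalar (\<beta> k * (of_int (int d - j - int c + int k) gchoose (b + k)))
                  * (dpow f (a - k) * (dpow_int e (int c - int k) * v)))"
  proof (rule sum.cong[OF refl])
    fix k
    have "H2 * (dpow_int e (int c - int k) * v)
        = rat_scalar (of_int (int d - j - int c + int k)) * (dpow_int e (int c - int k) * v)"
      using H2_weight_vector[OF weight_vector_dpow_int_e[OF v]] by (simp add: algebra_simps)
    then show "rat_scalar (\<beta> k) * (dpow f (a - k) * (binom H2 (b + k) * (dpow_int e (int c - int k) * v)))
        = rat_scalar (\<beta> k * (of_int (int d - j - int c + int k) gchoose (b + k)))
            * (dpow f (a - k) * (dpow_int e (int c - int k) * v))"
      by (simp only: binom_eigenvector rat_scalar_mult rat_scalar_left_commute[of "dpow f (a - k)"]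
          mult.assoc)
  qed
  finally show ?thesis .
qed

lemma relation_term_eq_0_large_weight:
  assumes v: "weight_vector j v" and abc: "a + b + c = d + 1" and "int a \<le> j"
  shows "(of_int (int d - j - int c + int k) gchoose (b + k) :: rat) = 0
         \<or> dpow_int e (int c - int k) * v = 0"
proof (cases "int d < j + (int c - int k)")
  case True
  then have "dpow_int e (int c - int k) * v = 0"
    by (intro weight_vector_eq_0[OF weight_vector_dpow_int_e[OF v]]) simp
  then show ?thesis ..
next
  case False
  define N where "N = nat (int d - j - int c + int k)"
  have "int N = int d - j - int c + int k" and "N < b + k"
    using False assms unfolding N_def by linarith+
  then have "(of_int (int d - j - int c + int k) gchoose (b + k) :: rat) = 0"
    by (metis binomial_eq_0 binomial_gbinomial of_int_of_nat_eq of_nat_0)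
  then show ?thesis ..
qed

lemma relation_sum_small_weight_collapse:
  assumes v: "weight_vector j v" and abc: "a + b + c = d + 1" and "j < int a"
  defines "N \<equiv> nat (int d - j - int c)" and "R \<equiv> nat (int a - j - 1)"
  shows "(\<Sum>k\<le>a. rat_scalar ((-1) ^ k * of_nat ((b + k) choose k)
                     * (of_int (int d - j - int c + int k) gchoose (b + k)))
            * (dpow f (a - k) * (dpow_int e (int c - int k) * v)))
       = (\<Sum>u\<le>a. rat_scalar ((of_nat N gchoose b) * of_nat (R choose u))
            * (dpow_int e (int c - int u) * (dpow f (a - u) * v)))"
proof -
  have N: "int N = int d - j - int c" and R: "int R = int a - j - 1"
    using assms unfolding N_def R_def by linarith+
  define L :: rat where "L = of_int (int d - 2 * j + int a - int c)"
  define Y where "Y u = dpow_int e (int c - int u) * (dpow f (a - u) * v)" for u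
  have coefficient: "(-1) ^ k * of_nat ((b + k) choose k) * (of_int (int d - j - int c + int k) gchoose (b + k))
      = (of_nat N gchoose b) * ((- of_nat N - 1) gchoose k :: rat)" for k
  proof -
    have "(of_int (int d - j - int c + int k) :: rat) = of_nat (N + k)"
      using N by simp
    then show ?thesis
      by (simp only: gbinomial_trinomial_negated)
  qed
  have Kostant: "dpow f (a - k) * (dpow_int e (int c - int k) * v)
      = (\<Sum>t\<le>a - k. rat_scalar (L gchoose t) * Y (k + t))" if "k \<le> a" for k
    unfolding Kostant_formula_weight_vector[OF v] Y_def L_def
    using that by (intro sum.cong) (simp_all add: of_nat_diff algebra_simps)
  have Vandermonde: "(\<Sum>k\<le>u. (of_nat N gchoose b) * ((- of_nat N - 1) gchoose k) * (L gchoose (u - k)))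
      = (of_nat N gchoose b) * of_nat (R choose u)" for u
  proof -
    have "(\<Sum>k\<le>u. (of_nat N gchoose b) * ((- of_nat N - 1) gchoose k) * (L gchoose (u - k)))
        = (of_nat N gchoose b) * ((- of_nat N - 1 + L) gchoose u)"
      by (simp only: mult.assoc atMost_atLeast0 gbinomial_Vandermonde flip: sum_distrib_left)
    also have "- of_nat N - 1 + L = of_nat R"
      using N R by (simp add: L_def)
    finally show ?thesis
      by (simp add: binomial_gbinomial)
  qed
  have "(\<Sum>k\<le>a. rat_scalar ((-1) ^ k * of_nat ((b + k) choose k)
                     * (of_int (int d - j - int c + int k) gchoose (b + k)))
            * (dpow f (a - k) * (dpow_int e (int c - int k) * v)))
      = (\<Sum>k\<le>a. rat_scalar ((of_nat N gchoose b) * ((- of_nat N - 1) gchoose k))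
            * (\<Sum>t\<le>a - k. rat_scalar (L gchoose t) * Y (k + t)))"
    by (intro sum.cong refl) (simp only: coefficient Kostant atMost_iff)
  also have "\<dots> = (\<Sum>u\<le>a. rat_scalar (\<Sum>k\<le>u. (of_nat N gchoose b) * ((- of_nat N - 1) gchoose k)
                                          * (L gchoose (u - k))) * Y u)"
    by (rule rat_scalar_sum_convolution)
  also have "\<dots> = (\<Sum>u\<le>a. rat_scalar ((of_nat N gchoose b) * of_nat (R choose u)) * Y u)"
    by (simp only: Vandermonde)
  finally show ?thesis
    by (simp only: Y_def)
qed

lemma relation_sum_eq_0_small_weight:
  assumes v: "weight_vector j v" and abc: "a + b + c = d + 1" and "j < int a"
  shows "(\<Sum>k\<le>a. rat_scalar ((-1) ^ k * of_nat ((b + k) choose k)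
                     * (of_int (int d - j - int c + int k) gchoose (b + k)))
            * (dpow f (a - k) * (dpow_int e (int c - int k) * v))) = 0"
  unfolding relation_sum_small_weight_collapse[OF assms]
proof (intro sum.neutral ballI)
  fix u
  assume "u \<in> {..a}"
  show "rat_scalar ((of_nat (nat (int d - j - int c)) gchoose b) * of_nat (nat (int a - j - 1) choose u))
      * (dpow_int e (int c - int u) * (dpow f (a - u) * v)) = 0"
  proof (cases "u \<le> nat (int a - j - 1)")
    case True
    have "dpow f (a - u) * v = 0"
      using True \<open>u \<in> {..a}\<close> \<open>j < int a\<close>
      by (intro weight_vector_eq_0[OF weight_vector_dpow_f[OF v]]) auto
    then show ?thesis
      by simp
  next
    case False
    then show ?thesis
      by (simp add: binomial_eq_0)
  qed
qed

lemma relation_weight_vector: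
  assumes "weight_vector j v" and "a + b + c = d + 1"
  shows "(\<Sum>k\<le>min a c. rat_scalar ((-1) ^ k * of_nat ((b + k) choose k))
            * (dpow f (a - k) * binom H2 (b + k) * dpow e (c - k))) * v = 0"
proof (cases "j < int a")
  case True
  then show ?thesis
    by (simp only: relation_weight_vector_expand[OF assms(1)]
        relation_sum_eq_0_small_weight[OF assms True])
next
  case False
  then have "int a \<le> j"
    by simp
  show ?thesis
    unfolding relation_weight_vector_expand[OF assms(1)]
  proof (intro sum.neutral ballI)
    fix k
    show "rat_scalar ((-1) ^ k * of_nat ((b + k) choose k)
            * (of_int (int d - j - int c + int k) gchoose (b + k)))
          * (dpow f (a - k) * (dpow_int e (int c - int k) * v)) = 0"
      using relation_term_eq_0_large_weight[OF assms \<open>int a \<le> j\<close>, of k] by auto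
  qed
qed

lemma falling_H2: "falling H2 (Suc d) = 0"
proof (rule eq_0_if_annihilates_eigenvectors[OF falling_H1])
  fix m v
  assume "m \<le> d" and "H1 * v = of_nat m * v"
  then have "weight_vector (int m) v"
    by (simp add: weight_vector_def)
  then have "falling H2 (Suc d) * v = rat_scalar (\<Prod>i<Suc d. of_int (int d - int m) - of_nat i) * v"
    by (intro falling_eigenvector H2_weight_vector)
  also have "(\<Prod>i<Suc d. of_int (int d - int m) - of_nat i :: rat) = 0"
    using \<open>m \<le> d\<close> by (auto simp: prod_zero_iff of_nat_diff intro!: bexI[of _ "d - m"])
  finally show "falling H2 (Suc d) * v = 0"
    by simp
qed

lemma Bd_swap: "Bd d f e H2 H1"
proof -
  have "Bd_rel d f e H2 H1"
    using relations falling_H2 unfolding Bd_rel_def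
    by (auto simp: add.commute) (metis minus_diff_eq)
  then show ?thesis
    by (simp add: Bd_def Bd_axioms_def Q_algebra_axioms)
qed

lemma relation_eq_0:
  assumes "a + b + c = d + 1"
  shows "(\<Sum>k\<le>min a c. rat_scalar ((-1) ^ k * of_nat ((b + k) choose k))
            * (dpow f (a - k) * binom H2 (b + k) * dpow e (c - k))) = 0"
proof (rule eq_0_if_annihilates_eigenvectors[OF falling_H1])
  fix m v
  assume "H1 * v = of_nat m * v"
  then have "weight_vector (int m) v"
    by (simp add: weight_vector_def)
  then show "(\<Sum>k\<le>min a c. rat_scalar ((-1) ^ k * of_nat ((b + k) choose k))
            * (dpow f (a - k) * binom H2 (b + k) * dpow e (c - k))) * v = 0"
    using assms by (rule relation_weight_vector)
qed

lemma dpow_f_binom_H2_dpow_e: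
  assumes "a + b + c = d + 1"
  shows "dpow f a * binom H2 b * dpow e c
       = (\<Sum>k = 1..min a c. of_int ((-1) ^ (k - 1)) * of_nat ((b + k) choose k)
            * dpow f (a - k) * binom H2 (b + k) * dpow e (c - k))"
proof -
  define X where "X k = dpow f (a - k) * binom H2 (b + k) * dpow e (c - k)" for k
  define S where "S = (\<Sum>k = 1..min a c. of_int ((-1) ^ (k - 1)) * of_nat ((b + k) choose k)
            * dpow f (a - k) * binom H2 (b + k) * dpow e (c - k))"
  have "rat_scalar ((-1) ^ k * of_nat ((b + k) choose k)) * X k
      = - (of_int ((-1) ^ (k - 1)) * of_nat ((b + k) choose k)
            * dpow f (a - k) * binom H2 (b + k) * dpow e (c - k))" if "1 \<le> k" for k
    using rat_scalar_sign_Suc[of "k - 1" "(b + k) choose k"] that by (simp add: X_def mult.assoc)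
  then have "(\<Sum>k = 1..min a c. rat_scalar ((-1) ^ k * of_nat ((b + k) choose k)) * X k) = - S"
    unfolding S_def sum_negf[symmetric] by (intro sum.cong refl) simp
  moreover have "(\<Sum>k\<le>min a c. rat_scalar ((-1) ^ k * of_nat ((b + k) choose k)) * X k)
      = X 0 + (\<Sum>k = 1..min a c. rat_scalar ((-1) ^ k * of_nat ((b + k) choose k)) * X k)"
    by (simp add: atMost_atLeast0 sum.atLeast_Suc_atMost)
  ultimately have "X 0 + - S = 0"
    using relation_eq_0[OF assms] by (simp add: X_def)
  then show ?thesis
    by (simp add: X_def S_def)
qed

end

theorem theorem6p1:
  fixes e f H1 H2 :: "'a::ring_1" and d a b c :: nat
  assumes "is_Q_algebra TYPE('a)"
    and "Bd_rel d e f H1 H2"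
    and "a + b + c = d + 1"
  shows "(dpow f a * binom H2 b * dpow e c =
           (\<Sum>k = 1..min a c. of_int ((-1) ^ (k - 1)) * of_nat ((b + k) choose k)
              * dpow f (a - k) * binom H2 (b + k) * dpow e (c - k))) \<and>
         (dpow e a * binom H1 b * dpow f c =
           (\<Sum>k = 1..min a c. of_int ((-1) ^ (k - 1)) * of_nat ((b + k) choose k)
              * dpow e (a - k) * binom H1 (b + k) * dpow f (c - k)))"
proof -
  interpret B: Bd d e f H1 H2
    using assms(1,2) by (simp add: Bd_def Bd_axioms_def Q_algebra_def)
  interpret S: Bd d f e H2 H1
    by (rule B.Bd_swap)
  show ?thesis
    using B.dpow_f_binom_H2_dpow_e[OF assms(3)] S.dpow_f_binom_H2_dpow_e[OF assms(3)] by blast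
qed

end
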